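(* Let $f:\mathbb{R}^n_{>0}\to\mathbb{R}^n_{>0}$ be order-preserving, homogeneous, real analytic, and multiplicatively convex. Then $\mathcal{G}(f)=\mathcal{G}(f'(x))$ for every $x\in\mathbb{R}^n_{>0}$.
   Context: Entrywise order. Order-preserving: $x\le y\Rightarrow f(x)\le f(y)$; homogeneous: $f(tx)=tf(x)$ for $t>0$; real analytic: each entry real analytic on $\mathbb{R}^n_{>0}$; multiplicatively convex: each entry of $\log\circ f\circ\exp$ is convex. $\mathcal{G}(f)$ is the directed graph on $[n]=\{1,\dots,n\}$ with an arc $i\to j$ when $\lim_{t\to\infty}f(\exp(te_{\{j\}}))_i=\infty$ ($e_{\{j\}}$ the $j$-th standard basis vector). For a nonnegative matrix $A=[a_{ij}]$ (here the Jacobian $f'(x)$), $\mathcal{G}(A)$ is the directed graph on $[n]$ with an arc $i\to j$ when $a_{ij}\ne0$. *)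

theory Defs
  imports "HOL-Analysis.Analysis"
begin

definition pos_orthant :: "(real ^ 'n) set" where
  "pos_orthant = {x. \<forall>i. 0 < x $ i}"

text \<open>Real analyticity of a scalar function on a set S of real^'n: near every
  point of S the function is the (absolutely, i.e. unconditionally, convergent)
  sum of a multivariate power series indexed by multi-indices.\<close>
definition real_analytic_on :: "(real ^ 'n \<Rightarrow> real) \<Rightarrow> (real ^ 'n) set \<Rightarrow> bool" where
  "real_analytic_on g S \<longleftrightarrow>
     (\<forall>x\<in>S. \<exists>r>0. \<exists>c :: ('n \<Rightarrow> nat) \<Rightarrow> real.
        \<forall>y\<in>ball x r.
          ((\<lambda>\<alpha>. c \<alpha> * (\<Prod>k\<in>UNIV. (y $ k - x $ k) ^ \<alpha> k)) has_sum g y) UNIV)"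

definition order_preserving_pos :: "(real ^ 'n \<Rightarrow> real ^ 'n) \<Rightarrow> bool" where
  "order_preserving_pos f \<longleftrightarrow>
     (\<forall>x\<in>pos_orthant. \<forall>y\<in>pos_orthant. x \<le> y \<longrightarrow> f x \<le> f y)"

definition homogeneous_pos :: "(real ^ 'n \<Rightarrow> real ^ 'n) \<Rightarrow> bool" where
  "homogeneous_pos f \<longleftrightarrow>
     (\<forall>x\<in>pos_orthant. \<forall>t::real. t > 0 \<longrightarrow> f (t *\<^sub>R x) = t *\<^sub>R f x)"

definition vexp :: "real ^ 'n \<Rightarrow> real ^ 'n" where
  "vexp y = (\<chi> k. exp (y $ k))"

definition mult_convex :: "(real ^ 'n \<Rightarrow> real ^ 'n) \<Rightarrow> bool" where
  "mult_convex f \<longleftrightarrow> (\<forall>i. convex_on UNIV (\<lambda>y. ln (f (vexp y) $ i)))"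

text \<open>Arc i -> j of G(f): lim_{t\<rightarrow>\<infinity>} f(exp(t e_j))_i = \<infinity>.\<close>
definition graph_f :: "(real ^ 'n \<Rightarrow> real ^ 'n) \<Rightarrow> 'n \<Rightarrow> 'n \<Rightarrow> bool" where
  "graph_f f i j \<longleftrightarrow>
     filterlim (\<lambda>t::real. f (vexp (t *\<^sub>R axis j 1)) $ i) at_top at_top"

text \<open>Jacobian matrix f'(x): entry (i,j) is the partial derivative of f_i in x_j.\<close>
definition jacobian :: "(real ^ 'n \<Rightarrow> real ^ 'n) \<Rightarrow> real ^ 'n \<Rightarrow> real ^ 'n ^ 'n" where
  "jacobian f x = matrix (frechet_derivative f (at x))"

text \<open>Arc i -> j of G(A): A_ij \<noteq> 0.\<close>
definition graph_mat :: "real ^ 'n ^ 'n \<Rightarrow> 'n \<Rightarrow> 'n \<Rightarrow> bool" where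
  "graph_mat A i j \<longleftrightarrow> A $ i $ j \<noteq> 0"

end

theory Submission
  imports Defs "HOL-Complex_Analysis.Cauchy_Integral_Formula"
begin

text \<open>Fix \<open>x > 0\<close> and an entry \<open>(i, j)\<close>, and let \<open>g(u)\<close> be \<open>f\<^sub>i\<close> evaluated at \<open>x\<close> with its
  \<open>j\<close>-th coordinate replaced by \<open>u\<close>. Multiplicative convexity makes \<open>s \<mapsto> ln g(e\<^sup>s)\<close> convex,
  so it lies above its tangent at \<open>ln x\<^sub>j\<close>, whose slope \<open>x\<^sub>j d / g(x\<^sub>j)\<close> is governed by the
  Jacobian entry \<open>d = f'(x)\<^sub>i\<^sub>j \<ge> 0\<close>. If \<open>d > 0\<close>, \<open>g(e\<^sup>t)\<close> grows exponentially. If \<open>d = 0\<close>,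
  the tangent is flat, so the monotone \<open>g\<close> is constant on \<open>(0, x\<^sub>j]\<close>, and by analyticity on
  all of \<open>(0, \<infinity>)\<close>. Order preservation and homogeneity make \<open>f(exp(t e\<^sub>j))\<^sub>i\<close> and \<open>g(e\<^sup>t)\<close>
  comparable up to constant factors, so \<open>g(e\<^sup>t) \<rightarrow> \<infinity>\<close> exactly when \<open>i \<rightarrow> j\<close> is an arc of \<open>\<G>(f)\<close>.\<close>

section \<open>Multi-indices and monomials\<close>

definition single_index :: "'n \<Rightarrow> nat \<Rightarrow> 'n \<Rightarrow> nat" where
  "single_index j m = (\<lambda>k. if k = j then m else 0)"

definition multi_degree :: "('n::finite \<Rightarrow> nat) \<Rightarrow> nat" where
  "multi_degree \<alpha> = (\<Sum>k\<in>UNIV. \<alpha> k)"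

definition monomial :: "real ^ 'n \<Rightarrow> ('n \<Rightarrow> nat) \<Rightarrow> real" where
  "monomial h \<alpha> = (\<Prod>k\<in>UNIV. h $ k ^ \<alpha> k)"

lemma inj_single_index: "inj (single_index j)"
  by (auto simp: inj_def single_index_def fun_eq_iff)

lemma monomial_single_index: "monomial h (single_index j m) = h $ j ^ m"
  by (simp add: monomial_def single_index_def if_distrib prod.If_cases)

lemma monomial_zero_index [simp]: "monomial h (\<lambda>_. 0) = 1"
  by (simp add: monomial_def)

lemma monomial_zero: "monomial 0 \<alpha> = (if \<alpha> = (\<lambda>_. 0) then 1 else 0)"
proof (cases "\<alpha> = (\<lambda>_. 0)")
  case False
  then obtain k where "\<alpha> k \<noteq> 0" by auto
  thus ?thesis by (auto simp: monomial_def intro!: prod_zero)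
qed (simp add: monomial_def)

lemma monomial_axis:
  "monomial (s *\<^sub>R axis j 1) \<alpha> = (if \<alpha> = single_index j (\<alpha> j) then s ^ \<alpha> j else 0)"
proof (cases "\<alpha> = single_index j (\<alpha> j)")
  case True
  have "monomial (s *\<^sub>R axis j 1) \<alpha> = monomial (s *\<^sub>R axis j 1) (single_index j (\<alpha> j))"
    by (rule arg_cong[OF True])
  then show ?thesis unfolding if_P[OF True] by (simp add: monomial_single_index)
next
  case False
  then obtain k where "\<alpha> k \<noteq> single_index j (\<alpha> j) k" by auto
  hence "k \<noteq> j" "\<alpha> k \<noteq> 0" by (auto simp: single_index_def split: if_splits)
  with False show ?thesis by (auto simp: monomial_def axis_def intro!: prod_zero)
qed

lemma monomial_const: "monomial (\<chi> k. \<rho>) \<alpha> = \<rho> ^ multi_degree \<alpha>"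
  by (simp add: monomial_def multi_degree_def power_sum)

lemma abs_monomial_le: "\<bar>monomial h \<alpha>\<bar> \<le> norm h ^ multi_degree \<alpha>"
proof -
  have "\<bar>monomial h \<alpha>\<bar> = (\<Prod>k\<in>UNIV. \<bar>h $ k\<bar> ^ \<alpha> k)"
    by (simp add: monomial_def abs_prod power_abs)
  also have "\<dots> \<le> (\<Prod>k\<in>UNIV. norm h ^ \<alpha> k)"
    by (intro prod_mono conjI power_mono component_le_norm_cart) auto
  finally show ?thesis by (simp add: multi_degree_def power_sum)
qed

definition low_degree_indices :: "('n \<Rightarrow> nat) set" where
  "low_degree_indices = insert (\<lambda>_. 0) (range (\<lambda>k. single_index k 1))"

lemma multi_degree_ge_2:
  fixes \<alpha> :: "'n::finite \<Rightarrow> nat"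
  assumes "\<alpha> \<notin> low_degree_indices"
  shows "2 \<le> multi_degree \<alpha>"
proof (rule ccontr)
  assume "\<not> 2 \<le> multi_degree \<alpha>"
  from assms obtain k where k: "\<alpha> k \<noteq> 0"
    by (auto simp: low_degree_indices_def)
  have "multi_degree \<alpha> \<le> 1"
    using \<open>\<not> 2 \<le> multi_degree \<alpha>\<close> by simp
  hence "\<alpha> k + (\<Sum>l\<in>UNIV - {k}. \<alpha> l) \<le> 1"
    by (simp add: multi_degree_def sum.remove)
  with k have "\<alpha> k = 1" and "(\<Sum>l\<in>UNIV - {k}. \<alpha> l) = 0"
    by arith+
  hence "\<alpha> = single_index k 1"
    by (auto simp: single_index_def fun_eq_iff)
  with assms show False
    by (simp add: low_degree_indices_def)
qed

lemma finite_low_degree_indices [simp]: "finite (low_degree_indices :: ('n::finite \<Rightarrow> nat) set)"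
  by (simp add: low_degree_indices_def)

lemma sum_low_degree_indices:
  fixes h :: "real ^ 'n"
  shows "(\<Sum>\<alpha>\<in>low_degree_indices. c \<alpha> * monomial h \<alpha>) = c (\<lambda>_. 0) + (\<chi> k. c (single_index k 1)) \<bullet> h"
proof -
  have "single_index k (1::nat) \<noteq> (\<lambda>_. 0)" for k
    by (simp add: single_index_def fun_eq_iff)
  hence "(\<lambda>_. 0) \<notin> range (\<lambda>k::'n. single_index k (1::nat))"
    by (metis rangeE)
  hence "(\<Sum>\<alpha>\<in>low_degree_indices. c \<alpha> * monomial h \<alpha>) =
      c (\<lambda>_. 0) * monomial h (\<lambda>_. 0) + (\<Sum>\<alpha>\<in>range (\<lambda>k. single_index k 1). c \<alpha> * monomial h \<alpha>)"
    unfolding low_degree_indices_def by (rule sum.insert[OF finite_imageI[OF finite]])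
  also have "(\<Sum>\<alpha>\<in>range (\<lambda>k. single_index k 1). c \<alpha> * monomial h \<alpha>) =
      (\<Sum>k\<in>UNIV. c (single_index k 1) * monomial h (single_index k 1))"
    by (rule sum.reindex_cong[where l = "\<lambda>k. single_index k 1"])
      (auto simp: inj_def single_index_def fun_eq_iff split: if_splits)
  finally show ?thesis
    by (simp add: monomial_single_index inner_vec_def mult.commute)
qed

section \<open>Multivariate power series\<close>

definition powser_expansion ::
    "(real ^ 'n \<Rightarrow> real) \<Rightarrow> (('n \<Rightarrow> nat) \<Rightarrow> real) \<Rightarrow> real ^ 'n \<Rightarrow> real \<Rightarrow> bool" where
  "powser_expansion F c x r \<longleftrightarrow>
     (\<forall>y\<in>ball x r. ((\<lambda>\<alpha>. c \<alpha> * monomial (y - x) \<alpha>) has_sum F y) UNIV)"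

lemma real_analytic_onE:
  assumes "real_analytic_on F S" "x \<in> S"
  obtains r c where "r > 0" "powser_expansion F c x r"
proof -
  obtain r c where r: "r > 0" and expansion:
      "\<forall>y\<in>ball x r. ((\<lambda>\<alpha>. c \<alpha> * (\<Prod>k\<in>UNIV. (y $ k - x $ k) ^ \<alpha> k)) has_sum F y) UNIV"
    using assms unfolding real_analytic_on_def by blast
  have "powser_expansion F c x r"
    using expansion by (simp add: powser_expansion_def monomial_def)
  with r show ?thesis
    by (rule that)
qed

lemma powser_expansion_centre:
  assumes "powser_expansion F c x r" "r > 0"
  shows "F x = c (\<lambda>_. 0)"
proof -
  have "x \<in> ball x r"
    using assms(2) by simp
  with assms(1) have "((\<lambda>\<alpha>. c \<alpha> * monomial (x - x) \<alpha>) has_sum F x) UNIV"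
    unfolding powser_expansion_def by (rule bspec)
  hence "((\<lambda>\<alpha>. c \<alpha> * monomial 0 \<alpha>) has_sum F x) UNIV"
    by simp
  moreover have "((\<lambda>\<alpha>. c \<alpha> * monomial 0 \<alpha>) has_sum c (\<lambda>_. 0)) UNIV"
    by (rule has_sum_finite_neutralI[where B = "{\<lambda>_. 0}"]) (auto simp: monomial_zero)
  ultimately show ?thesis
    using has_sum_unique by blast
qed

lemma powser_expansion_abs_summable:
  fixes F :: "real ^ 'n \<Rightarrow> real"
  assumes F: "powser_expansion F c x r" and \<rho>: "0 < \<rho>" "real CARD('n) * \<rho> < r"
  shows "(\<lambda>\<alpha>. \<bar>c \<alpha>\<bar> * \<rho> ^ multi_degree \<alpha>) summable_on UNIV"
proof -
  define p where "p = x + (\<chi> k. \<rho>)"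
  have "norm (p - x) \<le> (\<Sum>k\<in>UNIV. \<bar>(p - x) $ k\<bar>)"
    by (rule norm_le_l1_cart)
  also have "\<dots> < r"
    using \<rho> by (simp add: p_def)
  finally have "p \<in> ball x r"
    by (simp add: dist_norm norm_minus_commute)
  hence "((\<lambda>\<alpha>. c \<alpha> * monomial (p - x) \<alpha>) has_sum F p) UNIV"
    using F unfolding powser_expansion_def by blast
  hence "((\<lambda>\<alpha>. c \<alpha> * \<rho> ^ multi_degree \<alpha>) has_sum F p) UNIV"
    by (simp add: p_def monomial_const)
  hence "(\<lambda>\<alpha>. norm (c \<alpha> * \<rho> ^ multi_degree \<alpha>)) summable_on UNIV"
    by (rule summable_on_iff_abs_summable_on_real[THEN iffD1, OF has_sum_imp_summable])
  thus ?thesis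
    using \<rho> by (simp add: abs_mult)
qed

lemma powser_expansion_tail:
  fixes F :: "real ^ 'n \<Rightarrow> real"
  assumes F: "powser_expansion F c x r" and h: "norm h < r"
  shows "((\<lambda>\<alpha>. if \<alpha> \<in> low_degree_indices then 0 else c \<alpha> * monomial h \<alpha>) has_sum
      F (x + h) - F x - (\<chi> k. c (single_index k 1)) \<bullet> h) UNIV"
proof -
  define tm where "tm \<alpha> = c \<alpha> * monomial h \<alpha>" for \<alpha>
  have "x + h \<in> ball x r"
    using h by (simp add: dist_norm)
  hence "((\<lambda>\<alpha>. c \<alpha> * monomial (x + h - x) \<alpha>) has_sum F (x + h)) UNIV"
    using F unfolding powser_expansion_def by blast
  hence series: "(tm has_sum F (x + h)) UNIV"
    by (simp add: tm_def[abs_def])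
  have "(\<Sum>\<alpha>\<in>low_degree_indices. tm \<alpha>) = F x + (\<chi> k. c (single_index k 1)) \<bullet> h"
    using powser_expansion_centre[OF F le_less_trans[OF norm_ge_zero h]]
    by (simp add: tm_def sum_low_degree_indices)
  hence "((\<lambda>\<alpha>. if \<alpha> \<in> low_degree_indices then tm \<alpha> else 0) has_sum
      F x + (\<chi> k. c (single_index k 1)) \<bullet> h) UNIV"
    by (intro has_sum_finite_neutralI[where B = low_degree_indices]) auto
  from has_sum_add[OF series has_sum_uminusI[OF this]]
  have "((\<lambda>\<alpha>. tm \<alpha> + - (if \<alpha> \<in> low_degree_indices then tm \<alpha> else 0)) has_sum
      F (x + h) + - (F x + (\<chi> k. c (single_index k 1)) \<bullet> h)) UNIV" .
  moreover have "(\<lambda>\<alpha>. tm \<alpha> + - (if \<alpha> \<in> low_degree_indices then tm \<alpha> else 0)) =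
      (\<lambda>\<alpha>. if \<alpha> \<in> low_degree_indices then 0 else tm \<alpha>)"
    by auto
  ultimately have "((\<lambda>\<alpha>. if \<alpha> \<in> low_degree_indices then 0 else tm \<alpha>) has_sum
      F (x + h) - F x - (\<chi> k. c (single_index k 1)) \<bullet> h) UNIV"
    by (simp add: algebra_simps)
  thus ?thesis
    unfolding tm_def .
qed

lemma powser_expansion_remainder:
  fixes F :: "real ^ 'n \<Rightarrow> real"
  assumes F: "powser_expansion F c x r"
    and B: "((\<lambda>\<alpha>. \<bar>c \<alpha>\<bar> * \<rho> ^ multi_degree \<alpha>) has_sum B) UNIV"
    and \<rho>: "0 < \<rho>" "\<rho> \<le> r" and h: "norm h < \<rho>"
  shows "\<bar>F (x + h) - F x - (\<chi> k. c (single_index k 1)) \<bullet> h\<bar> \<le> B * (norm h / \<rho>)\<^sup>2"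
proof -
  define t where "t = norm h / \<rho>"
  have t: "0 \<le> t" "t \<le> 1"
    using h \<rho> by (auto simp: t_def)
  have "norm (if \<alpha> \<in> low_degree_indices then 0 else c \<alpha> * monomial h \<alpha>) \<le>
      t\<^sup>2 * (\<bar>c \<alpha>\<bar> * \<rho> ^ multi_degree \<alpha>)" for \<alpha>
  proof (cases "\<alpha> \<in> low_degree_indices")
    case False
    have "\<bar>monomial h \<alpha>\<bar> \<le> norm h ^ multi_degree \<alpha>"
      by (rule abs_monomial_le)
    also have "\<dots> = t ^ multi_degree \<alpha> * \<rho> ^ multi_degree \<alpha>"
      using \<rho> by (simp add: t_def power_divide)
    also have "\<dots> \<le> t\<^sup>2 * \<rho> ^ multi_degree \<alpha>"
      using t \<rho> multi_degree_ge_2[OF False] by (intro mult_right_mono power_decreasing) auto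
    finally show ?thesis
      using False by (simp add: abs_mult mult_left_mono mult.left_commute)
  qed (use \<rho> in simp)
  hence "\<bar>F (x + h) - F x - (\<chi> k. c (single_index k 1)) \<bullet> h\<bar> \<le> t\<^sup>2 * B"
    using norm_infsum_le[OF powser_expansion_tail[OF F less_le_trans[OF h \<rho>(2)]] has_sum_cmult_right[OF B]]
    by simp
  thus ?thesis
    by (simp only: t_def mult.commute)
qed

lemma has_derivative_at_quadratic_remainder:
  fixes F :: "'a::real_normed_vector \<Rightarrow> 'b::real_normed_vector"
  assumes L: "bounded_linear L" and \<rho>: "0 < \<rho>"
    and rem: "\<And>h. norm h < \<rho> \<Longrightarrow> norm (F (x + h) - F x - L h) \<le> C * (norm h)\<^sup>2"
  shows "(F has_derivative L) (at x)"
  unfolding has_derivative_at_alt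
proof (intro conjI L allI impI)
  fix e :: real
  assume e: "0 < e"
  define d where "d = min \<rho> (e / (\<bar>C\<bar> + 1))"
  have "norm (F y - F x - L (y - x)) \<le> e * norm (y - x)" if y: "norm (y - x) < d" for y
  proof -
    have "norm (F y - F x - L (y - x)) \<le> C * (norm (y - x))\<^sup>2"
      using rem[of "y - x"] y by (simp add: d_def)
    also have "\<dots> \<le> (\<bar>C\<bar> * norm (y - x)) * norm (y - x)"
      using mult_right_mono[OF abs_ge_self[of C], of "(norm (y - x))\<^sup>2"]
      by (simp add: power2_eq_square mult.assoc)
    also have "\<dots> \<le> e * norm (y - x)"
    proof (rule mult_right_mono)
      have "\<bar>C\<bar> * norm (y - x) \<le> \<bar>C\<bar> * (e / (\<bar>C\<bar> + 1))"
        using y by (intro mult_left_mono) (auto simp: d_def)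
      also have "\<dots> \<le> e"
        using e by (simp add: field_simps)
      finally show "\<bar>C\<bar> * norm (y - x) \<le> e" .
    qed simp
    finally show ?thesis .
  qed
  moreover have "0 < d"
    using \<rho> e by (simp add: d_def)
  ultimately show "\<exists>d>0. \<forall>y. norm (y - x) < d \<longrightarrow> norm (F y - F x - L (y - x)) \<le> e * norm (y - x)"
    by blast
qed

lemma powser_expansion_has_derivative:
  fixes F :: "real ^ 'n \<Rightarrow> real"
  assumes F: "powser_expansion F c x r" and r: "0 < r"
  shows "(F has_derivative (\<lambda>h. (\<chi> k. c (single_index k 1)) \<bullet> h)) (at x)"
proof -
  define \<rho> where "\<rho> = r / (2 * real CARD('n))"
  have "1 \<le> real CARD('n)"
    using zero_less_card_finite[where 'a = 'n] by linarith
  have \<rho>1: "0 < \<rho>" and \<rho>2: "real CARD('n) * \<rho> < r"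
    using r by (simp_all add: \<rho>_def)
  have "\<rho> \<le> r"
    using mult_right_mono[OF \<open>1 \<le> real CARD('n)\<close> less_imp_le[OF \<rho>1]] \<rho>2 by simp
  note \<rho> = \<rho>1 \<rho>2 this
  obtain B where B: "((\<lambda>\<alpha>. \<bar>c \<alpha>\<bar> * \<rho> ^ multi_degree \<alpha>) has_sum B) UNIV"
    using powser_expansion_abs_summable[OF F \<rho>(1,2)] by (auto simp: summable_on_def)
  show ?thesis
  proof (rule has_derivative_at_quadratic_remainder[where C = "B / \<rho>\<^sup>2"])
    fix h :: "real ^ 'n"
    assume "norm h < \<rho>"
    thus "norm (F (x + h) - F x - (\<chi> k. c (single_index k 1)) \<bullet> h) \<le> B / \<rho>\<^sup>2 * (norm h)\<^sup>2"
      using powser_expansion_remainder[OF F B \<rho>(1,3)] by (simp add: power_divide)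
  qed (use \<rho> in \<open>auto intro: bounded_linear_inner_right\<close>)
qed

lemma powser_expansion_axis_line:
  fixes F :: "real ^ 'n \<Rightarrow> real"
  assumes F: "powser_expansion F c x r" and s: "\<bar>s\<bar> < r"
  shows "(\<lambda>m. c (single_index j m) * s ^ m) sums F (x + s *\<^sub>R axis j 1)"
proof -
  have "x + s *\<^sub>R axis j 1 \<in> ball x r"
    using s by (simp add: dist_norm)
  with F have "((\<lambda>\<alpha>. c \<alpha> * monomial (x + s *\<^sub>R axis j 1 - x) \<alpha>) has_sum F (x + s *\<^sub>R axis j 1)) UNIV"
    unfolding powser_expansion_def by (rule bspec)
  hence "((\<lambda>\<alpha>. c \<alpha> * monomial (s *\<^sub>R axis j 1) \<alpha>) has_sum F (x + s *\<^sub>R axis j 1)) (range (single_index j))"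
    by (subst has_sum_cong_neutral[where T = UNIV]) (auto simp: monomial_axis)
  hence "((\<lambda>m. c (single_index j m) * monomial (s *\<^sub>R axis j 1) (single_index j m))
      has_sum F (x + s *\<^sub>R axis j 1)) UNIV"
    by (simp add: has_sum_reindex[OF inj_single_index] o_def)
  thus ?thesis
    by (intro has_sum_imp_sums) (simp add: monomial_single_index)
qed

section \<open>Functions of one real variable\<close>

definition locally_powser_on :: "(real \<Rightarrow> real) \<Rightarrow> real set \<Rightarrow> bool" where
  "locally_powser_on \<phi> S \<longleftrightarrow>
     (\<forall>u\<in>S. \<exists>r>0. \<exists>c. \<forall>s. \<bar>s\<bar> < r \<longrightarrow> (\<lambda>m. c m * s ^ m) sums \<phi> (u + s))"

lemma powser_const_on_left_imp_const:
  fixes \<phi> :: "real \<Rightarrow> real" and c :: "nat \<Rightarrow> real"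
  assumes r: "0 < r" and sm: "\<And>s. \<bar>s\<bar> < r \<Longrightarrow> (\<lambda>m. c m * s ^ m) sums \<phi> (S + s)"
    and S: "\<phi> S = K" and left: "\<forall>\<^sub>F v in at_left S. \<phi> v = K"
    and s: "\<bar>s\<bar> < r"
  shows "\<phi> (S + s) = K"
proof -
  have higher_zero: "c m = 0" if "0 < m" for m
  proof (rule ccontr)
    assume "c m \<noteq> 0"
    define a where "a n = (if n = 0 then c 0 - K else c n)" for n
    obtain \<delta> where \<delta>: "0 < \<delta>" and isolated: "\<And>z. z \<in> cball S \<delta> - {S} \<Longrightarrow> \<phi> z - K \<noteq> 0"
    proof (rule powser_0_nonzero[where a = a and \<xi> = S and f = "\<lambda>z. \<phi> z - K" and m = m, OF r])
      fix z :: real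
      assume "norm (z - S) < r"
      hence "(\<lambda>n. c n * (z - S) ^ n - (if n = 0 then K else 0)) sums (\<phi> z - K)"
        using sums_diff[OF sm[of "z - S"] sums_single[of 0 "\<lambda>_. K"]] by simp
      moreover have "(\<lambda>n. c n * (z - S) ^ n - (if n = 0 then K else 0)) = (\<lambda>n. a n * (z - S) ^ n)"
        by (auto simp: a_def fun_eq_iff)
      ultimately show "(\<lambda>n. a n * (z - S) ^ n) sums (\<phi> z - K)"
        by simp
    qed (use S \<open>c m \<noteq> 0\<close> \<open>0 < m\<close> in \<open>auto simp: a_def\<close>)
    have "\<forall>\<^sub>F v in at_left S. v \<in> cball S \<delta> - {S}"
      using eventually_at_left_real[of "S - \<delta>" S] \<delta>
      by (auto elim!: eventually_mono simp: dist_real_def)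
    with left have "\<forall>\<^sub>F v in at_left S. False"
      by eventually_elim (use isolated in auto)
    thus False
      by simp
  qed
  have "(\<lambda>m. c m * s ^ m) = (\<lambda>m. if m = 0 then c 0 else 0)"
    using higher_zero by (auto simp: fun_eq_iff)
  hence "(\<lambda>m. c m * s ^ m) sums c 0"
    using sums_single[of 0 "\<lambda>_. c 0"] by simp
  moreover have "(\<lambda>m. c m * 0 ^ m) sums K"
    using sm[of 0] r S by simp
  hence "c 0 = K"
    using sums_unique2 powser_sums_zero by blast
  ultimately show ?thesis
    using sm[OF s] sums_unique2 by blast
qed

lemma locally_powser_const_extend:
  fixes \<phi> :: "real \<Rightarrow> real"
  assumes a: "0 < a"
    and ps: "locally_powser_on \<phi> {0<..}"
    and cont: "continuous_on {0<..} \<phi>"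
    and const: "\<And>u. 0 < u \<Longrightarrow> u \<le> a \<Longrightarrow> \<phi> u = K"
    and u: "0 < u"
  shows "\<phi> u = K"
proof (rule ccontr)
  assume "\<phi> u \<noteq> K"
  define A where "A = {v. 0 < v \<and> (\<forall>w. 0 < w \<longrightarrow> w \<le> v \<longrightarrow> \<phi> w = K)}"
  have "a \<in> A"
    using a const by (auto simp: A_def)
  have "v < u" if "v \<in> A" for v
    using that u \<open>\<phi> u \<noteq> K\<close> by (force simp: A_def)
  hence bdd: "bdd_above A"
    by (meson bdd_aboveI less_imp_le)
  define S where "S = Sup A"
  have S: "0 < S"
    using cSup_upper[OF \<open>a \<in> A\<close> bdd] a by (simp add: S_def)
  have below: "\<phi> w = K" if "0 < w" "w < S" for w
  proof -
    obtain v where "v \<in> A" "w < v"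
      using less_cSupD[OF _ \<open>w < S\<close>[unfolded S_def]] \<open>a \<in> A\<close> by blast
    thus ?thesis
      using that by (auto simp: A_def)
  qed
  have left: "\<forall>\<^sub>F v in at_left S. \<phi> v = K"
    using eventually_at_left_real[OF S] by eventually_elim (simp add: below)
  have "(\<phi> \<longlongrightarrow> \<phi> S) (at_left S)"
    using cont S by (auto simp: continuous_on_eq_continuous_at isCont_def filterlim_at_split)
  hence "((\<lambda>_. K) \<longlongrightarrow> \<phi> S) (at_left S)"
    using left by (rule Lim_transform_eventually)
  hence "\<phi> S = K"
    using tendsto_const tendsto_unique trivial_limit_at_left_real by metis
  from S have "S \<in> {0<..}"
    by simp
  then obtain r c where r: "0 < r" and sm: "\<And>s. \<bar>s\<bar> < r \<Longrightarrow> (\<lambda>m. c m * s ^ m) sums \<phi> (S + s)"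
    using ps unfolding locally_powser_on_def by blast
  have "S + r / 2 \<in> A"
    unfolding A_def
  proof (intro CollectI conjI allI impI)
    fix w
    assume "0 < w" "w \<le> S + r / 2"
    show "\<phi> w = K"
    proof (cases "w < S")
      case False
      hence "\<phi> (S + (w - S)) = K"
        using \<open>w \<le> S + r / 2\<close> r
        by (intro powser_const_on_left_imp_const[OF r sm \<open>\<phi> S = K\<close> left]) auto
      thus ?thesis
        by simp
    qed (use below \<open>0 < w\<close> in blast)
  qed (use S r in simp)
  hence "S + r / 2 \<le> S"
    unfolding S_def using bdd by (rule cSup_upper)
  thus False
    using r by simp
qed

lemma mult_convex_continuous_on:
  fixes g :: "real \<Rightarrow> real"
  assumes conv: "convex_on UNIV (\<lambda>s. ln (g (exp s)))" and pos: "\<And>u. 0 < u \<Longrightarrow> 0 < g u"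
  shows "continuous_on {0<..} g"
proof -
  have "continuous_on UNIV (\<lambda>s. ln (g (exp s)))"
    by (rule convex_on_continuous[OF open_UNIV conv])
  moreover have "continuous_on {0<..} (\<lambda>u::real. ln u)"
    by (rule continuous_on_ln[OF continuous_on_id]) auto
  ultimately have "continuous_on {0<..} (\<lambda>u. ln (g (exp (ln u))))"
    by (rule continuous_on_compose2) auto
  hence "continuous_on {0<..} (\<lambda>u. exp (ln (g (exp (ln u)))))"
    by (rule continuous_on_exp)
  thus ?thesis
    by (rule continuous_on_eq) (use pos in auto)
qed

lemma mult_convex_above_tangent:
  fixes g :: "real \<Rightarrow> real"
  assumes conv: "convex_on UNIV (\<lambda>s. ln (g (exp s)))"
    and a: "0 < a" "0 < g a" and der: "(g has_real_derivative d) (at a)"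
  shows "ln (g a) + a * d / g a * (s - ln a) \<le> ln (g (exp s))"
proof -
  have inner: "(exp has_real_derivative a) (at (ln a))"
    using DERIV_exp[of "ln a"] a by simp
  have outer: "(g has_real_derivative d) (at (exp (ln a)))"
    using der a by simp
  have "(ln has_real_derivative inverse (g a)) (at (g (exp (ln a))))"
    using DERIV_ln[of "g a"] a by simp
  from DERIV_chain2[OF this DERIV_chain2[OF outer inner]]
  have "((\<lambda>s. ln (g (exp s))) has_real_derivative inverse (g a) * (d * a)) (at (ln a))" .
  hence "inverse (g a) * (d * a) * (s - ln a) \<le> ln (g (exp s)) - ln (g (exp (ln a)))"
    by (intro convex_on_imp_above_tangent[OF conv]) auto
  thus ?thesis
    using a by (simp add: field_simps)
qed

lemma mult_convex_deriv_zero_imp_const: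
  fixes g :: "real \<Rightarrow> real"
  assumes pos: "\<And>u. 0 < u \<Longrightarrow> 0 < g u" and mono: "mono_on {0<..} g"
    and conv: "convex_on UNIV (\<lambda>s. ln (g (exp s)))"
    and ps: "locally_powser_on g {0<..}"
    and a: "0 < a" and der: "(g has_real_derivative 0) (at a)"
    and u: "0 < u"
  shows "g u = g a"
proof -
  have "g v = g a" if "0 < v" "v \<le> a" for v
  proof (rule antisym)
    show "g v \<le> g a"
      using mono that by (auto elim: mono_onD)
    have "ln (g a) \<le> ln (g v)"
      using mult_convex_above_tangent[OF conv a pos[OF a] der, of "ln v"] that by simp
    thus "g a \<le> g v"
      using pos a that by simp
  qed
  with u show ?thesis
    using locally_powser_const_extend[OF a ps mult_convex_continuous_on[OF conv pos]] by blast
qed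

lemma mult_convex_deriv_pos_imp_at_top:
  fixes g :: "real \<Rightarrow> real"
  assumes pos: "\<And>u. 0 < u \<Longrightarrow> 0 < g u" and conv: "convex_on UNIV (\<lambda>s. ln (g (exp s)))"
    and a: "0 < a" and der: "(g has_real_derivative d) (at a)" and d: "0 < d"
  shows "filterlim (\<lambda>t. g (exp t)) at_top at_top"
proof -
  define q where "q = a * d / g a"
  have "0 < q"
    using a d pos[OF a] by (simp add: q_def)
  hence "filterlim (\<lambda>t. (ln (g a) - q * ln a) + q * t) at_top at_top"
    by (intro filterlim_tendsto_add_at_top[OF tendsto_const]
        filterlim_tendsto_pos_mult_at_top[OF tendsto_const _ filterlim_ident])
  moreover have "\<forall>\<^sub>F t in at_top. (ln (g a) - q * ln a) + q * t \<le> ln (g (exp t))"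
  proof (intro always_eventually allI)
    fix t
    show "(ln (g a) - q * ln a) + q * t \<le> ln (g (exp t))"
      using mult_convex_above_tangent[OF conv a pos[OF a] der, of t]
      unfolding q_def right_diff_distrib by linarith
  qed
  ultimately have "filterlim (\<lambda>t. ln (g (exp t))) at_top at_top"
    by (rule filterlim_at_top_mono)
  hence "filterlim (\<lambda>t. exp (ln (g (exp t)))) at_top at_top"
    by (rule filterlim_compose[OF exp_at_top])
  thus ?thesis
    using pos by simp
qed

lemma mult_convex_at_top_iff_deriv_nonzero:
  fixes g :: "real \<Rightarrow> real"
  assumes pos: "\<And>u. 0 < u \<Longrightarrow> 0 < g u" and mono: "mono_on {0<..} g"
    and conv: "convex_on UNIV (\<lambda>s. ln (g (exp s)))"
    and ps: "locally_powser_on g {0<..}"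
    and a: "0 < a" and der: "(g has_real_derivative d) (at a)"
  shows "filterlim (\<lambda>t. g (exp t)) at_top at_top \<longleftrightarrow> d \<noteq> 0"
proof (cases "d = 0")
  case True
  hence "((\<lambda>t. g (exp t)) \<longlongrightarrow> g a) at_top"
    using mult_convex_deriv_zero_imp_const[OF pos mono conv ps a] der by simp
  hence "\<not> filterlim (\<lambda>t. g (exp t)) at_top at_top"
    using not_tendsto_and_filterlim_at_infinity[OF trivial_limit_at_top_linorder]
      filterlim_at_top_imp_at_infinity
    by blast
  with True show ?thesis
    by simp
next
  case False
  moreover have "0 \<le> d"
    using mono_on_imp_deriv_nonneg[OF mono der] a by (simp add: interior_open)
  ultimately show ?thesis
    using mult_convex_deriv_pos_imp_at_top[OF pos conv a der] by simp
qed

section \<open>Coordinate rays in the positive orthant\<close>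

definition vec_upd :: "real ^ 'n \<Rightarrow> 'n \<Rightarrow> real \<Rightarrow> real ^ 'n" where
  "vec_upd x j u = x + (u - x $ j) *\<^sub>R axis j 1"

lemma vec_upd_nth [simp]: "vec_upd x j u $ k = (if k = j then u else x $ k)"
  by (simp add: vec_upd_def axis_def)

lemma vec_upd_same [simp]: "vec_upd x j (x $ j) = x"
  by (simp add: vec_upd_def)

lemma vec_upd_add_axis: "vec_upd x j u + s *\<^sub>R axis j 1 = vec_upd x j (u + s)"
  by (simp add: vec_upd_def algebra_simps)

lemma vec_upd_in_pos_orthant: "x \<in> pos_orthant \<Longrightarrow> 0 < u \<Longrightarrow> vec_upd x j u \<in> pos_orthant"
  by (simp add: pos_orthant_def)

lemma vec_upd_mono: "u \<le> v \<Longrightarrow> vec_upd x j u \<le> vec_upd x j v"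
  by (simp add: less_eq_vec_def)

lemma vexp_vec_upd: "vexp (vec_upd y j s) = vec_upd (vexp y) j (exp s)"
  by (simp add: vec_eq_iff vexp_def)

lemma vexp_scaled_axis: "vexp (t *\<^sub>R axis j 1) = vec_upd 1 j (exp t)"
  by (simp add: vec_eq_iff vexp_def axis_def)

lemma order_preserving_homogeneous_le_scaled:
  assumes op: "order_preserving_pos f" and hom: "homogeneous_pos f"
    and u: "u \<in> pos_orthant" and v: "v \<in> pos_orthant" and c: "0 < c" and le: "u \<le> c *\<^sub>R v"
  shows "f u \<le> c *\<^sub>R f v"
proof -
  have "c *\<^sub>R v \<in> pos_orthant"
    using v c by (simp add: pos_orthant_def)
  hence "f u \<le> f (c *\<^sub>R v)"
    using op u le unfolding order_preserving_pos_def by blast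
  also have "\<dots> = c *\<^sub>R f v"
    using hom v c unfolding homogeneous_pos_def by blast
  finally show ?thesis .
qed

lemma ray_at_top_transfer:
  fixes f :: "real ^ 'n \<Rightarrow> real ^ 'n"
  assumes op: "order_preserving_pos f" and hom: "homogeneous_pos f"
    and x: "x \<in> pos_orthant" and y: "y \<in> pos_orthant"
    and lim: "filterlim (\<lambda>t. f (vec_upd y j (exp t)) $ i) at_top at_top"
  shows "filterlim (\<lambda>t. f (vec_upd x j (exp t)) $ i) at_top at_top"
proof -
  define C where "C = insert 1 (range (\<lambda>k. y $ k / x $ k))"
  define c where "c = Max C"
  have "finite C" "1 \<in> C" "y $ k / x $ k \<in> C" for k
    by (simp_all add: C_def)
  hence c: "1 \<le> c" "\<And>k. y $ k / x $ k \<le> c"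
    by (simp_all add: c_def)
  have "f (vec_upd y j (exp t)) $ i \<le> c * f (vec_upd x j (exp t)) $ i" for t
  proof -
    have "vec_upd y j (exp t) \<le> c *\<^sub>R vec_upd x j (exp t)"
      using c x by (auto simp: less_eq_vec_def pos_orthant_def pos_divide_le_eq)
    hence "f (vec_upd y j (exp t)) \<le> c *\<^sub>R f (vec_upd x j (exp t))"
      using c x y by (intro order_preserving_homogeneous_le_scaled[OF op hom]) (auto simp: vec_upd_in_pos_orthant)
    thus ?thesis
      by (simp add: less_eq_vec_def)
  qed
  hence bound: "inverse c * f (vec_upd y j (exp t)) $ i \<le> f (vec_upd x j (exp t)) $ i" for t
    using c by (simp add: field_simps)
  from c have "0 < inverse c"
    by simp
  from filterlim_tendsto_pos_mult_at_top[OF tendsto_const this lim]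
  show ?thesis
    by (rule filterlim_at_top_mono) (simp add: bound)
qed

lemma graph_f_iff_ray_at_top:
  fixes f :: "real ^ 'n \<Rightarrow> real ^ 'n"
  assumes op: "order_preserving_pos f" and hom: "homogeneous_pos f" and x: "x \<in> pos_orthant"
  shows "graph_f f i j \<longleftrightarrow> filterlim (\<lambda>t. f (vec_upd x j (exp t)) $ i) at_top at_top"
proof -
  have "1 \<in> pos_orthant"
    by (simp add: pos_orthant_def)
  thus ?thesis
    unfolding graph_f_def vexp_scaled_axis
    using ray_at_top_transfer[OF op hom x] ray_at_top_transfer[OF op hom _ x] by blast
qed

lemma jacobian_nth_eq_gradient:
  fixes f :: "real ^ 'n \<Rightarrow> real ^ 'n"
  assumes W: "\<And>i. ((\<lambda>y. f y $ i) has_derivative (\<lambda>h. W i \<bullet> h)) (at x)"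
  shows "jacobian f x $ i $ j = W i $ j"
proof -
  have "(f has_derivative (\<lambda>h. \<chi> i. W i \<bullet> h)) (at x)"
  proof (subst has_derivative_componentwise_within, intro ballI)
    fix b :: "real ^ 'n"
    assume "b \<in> Basis"
    then obtain k where b: "b = axis k 1"
      by (auto simp: Basis_vec_def)
    show "((\<lambda>y. f y \<bullet> b) has_derivative (\<lambda>h. (\<chi> i. W i \<bullet> h) \<bullet> b)) (at x)"
      using W[of k] by (simp add: b inner_axis)
  qed
  hence "frechet_derivative f (at x) = (\<lambda>h. \<chi> i. W i \<bullet> h)"
    by (rule frechet_derivative_at[symmetric])
  thus ?thesis
    by (simp add: jacobian_def matrix_def inner_axis)
qed

lemma has_real_derivative_along_axis:
  fixes F :: "real ^ 'n \<Rightarrow> real"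
  assumes "(F has_derivative (\<lambda>h. w \<bullet> h)) (at (vec_upd x j u))"
  shows "((\<lambda>u. F (vec_upd x j u)) has_real_derivative w $ j) (at u)"
proof -
  have "((\<lambda>u. vec_upd x j u) has_derivative (\<lambda>h. h *\<^sub>R axis j 1)) (at u)"
    unfolding vec_upd_def by (auto intro!: derivative_eq_intros)
  from has_derivative_compose[OF this assms]
  have "((\<lambda>u. F (vec_upd x j u)) has_derivative (\<lambda>h. w \<bullet> (h *\<^sub>R axis j 1))) (at u)" .
  moreover have "(\<lambda>h. w \<bullet> (h *\<^sub>R axis j (1::real))) = (*) (w $ j)"
    by (auto simp: fun_eq_iff inner_axis)
  ultimately show ?thesis
    by (simp add: has_field_derivative_def)
qed

lemma real_analytic_on_has_gradient:
  assumes "real_analytic_on F S" "x \<in> S"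
  obtains w where "(F has_derivative (\<lambda>h. w \<bullet> h)) (at x)"
  using real_analytic_onE[OF assms] powser_expansion_has_derivative by metis

lemma real_analytic_jacobian_along_axis:
  fixes f :: "real ^ 'n \<Rightarrow> real ^ 'n"
  assumes an: "\<forall>i. real_analytic_on (\<lambda>x. f x $ i) S" and x: "x \<in> S"
  shows "((\<lambda>u. f (vec_upd x j u) $ i) has_real_derivative jacobian f x $ i $ j) (at (x $ j))"
proof -
  have "\<forall>i. \<exists>w. ((\<lambda>y. f y $ i) has_derivative (\<lambda>h. w \<bullet> h)) (at x)"
    using real_analytic_on_has_gradient[OF an[rule_format] x] by metis
  then obtain W where W: "\<And>i. ((\<lambda>y. f y $ i) has_derivative (\<lambda>h. W i \<bullet> h)) (at x)"
    by metis
  show ?thesis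
    using has_real_derivative_along_axis[of "\<lambda>y. f y $ i" "W i" x j "x $ j"] W
    by (simp add: jacobian_nth_eq_gradient[OF W])
qed

lemma real_analytic_on_ray_locally_powser:
  assumes an: "real_analytic_on F pos_orthant" and x: "x \<in> pos_orthant"
  shows "locally_powser_on (\<lambda>u. F (vec_upd x j u)) {0<..}"
  unfolding locally_powser_on_def
proof
  fix u :: real
  assume "u \<in> {0<..}"
  hence "vec_upd x j u \<in> pos_orthant"
    using x by (simp add: vec_upd_in_pos_orthant)
  then obtain r c where "0 < r" "powser_expansion F c (vec_upd x j u) r"
    using real_analytic_onE[OF an] by blast
  thus "\<exists>r>0. \<exists>c. \<forall>s. \<bar>s\<bar> < r \<longrightarrow> (\<lambda>m. c m * s ^ m) sums F (vec_upd x j (u + s))"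
    using powser_expansion_axis_line[of F c "vec_upd x j u" r _ j] by (metis vec_upd_add_axis)
qed

lemma convex_on_line:
  fixes G :: "'a::real_vector \<Rightarrow> real"
  assumes "convex_on UNIV G"
  shows "convex_on UNIV (\<lambda>s::real. G (y + s *\<^sub>R e))"
proof (rule convex_onI)
  fix t a b :: real
  assume "0 < t" "t < 1"
  moreover have "y + ((1 - t) *\<^sub>R a + t *\<^sub>R b) *\<^sub>R e = (1 - t) *\<^sub>R (y + a *\<^sub>R e) + t *\<^sub>R (y + b *\<^sub>R e)"
    by (simp add: algebra_simps)
  ultimately show "G (y + ((1 - t) *\<^sub>R a + t *\<^sub>R b) *\<^sub>R e) \<le> (1 - t) * G (y + a *\<^sub>R e) + t * G (y + b *\<^sub>R e)"
    using convex_onD[OF assms] by simp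
qed simp

lemma mult_convex_ray:
  assumes mc: "mult_convex f" and x: "x \<in> pos_orthant"
  shows "convex_on UNIV (\<lambda>s. ln (f (vec_upd x j (exp s)) $ i))"
proof -
  define y where "y = (\<chi> k. ln (x $ k))"
  have "vexp y = x"
    using x by (simp add: y_def vexp_def pos_orthant_def vec_eq_iff)
  have "convex_on UNIV (\<lambda>s. ln (f (vexp ((y - y $ j *\<^sub>R axis j 1) + s *\<^sub>R axis j 1)) $ i))"
    using mc unfolding mult_convex_def by (intro convex_on_line) blast
  moreover have "(y - y $ j *\<^sub>R axis j 1) + s *\<^sub>R axis j 1 = vec_upd y j s" for s
    by (simp add: vec_upd_def algebra_simps)
  ultimately show ?thesis
    by (simp add: vexp_vec_upd \<open>vexp y = x\<close>)
qed

lemma order_preserving_ray_mono: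
  assumes op: "order_preserving_pos f" and x: "x \<in> pos_orthant"
  shows "mono_on {0<..} (\<lambda>u. f (vec_upd x j u) $ i)"
proof (rule mono_onI)
  fix u v :: real
  assume "u \<in> {0<..}" "u \<le> v"
  hence "vec_upd x j u \<in> pos_orthant" "vec_upd x j v \<in> pos_orthant"
    using vec_upd_in_pos_orthant[OF x] by auto
  moreover have "vec_upd x j u \<le> vec_upd x j v"
    using \<open>u \<le> v\<close> by (rule vec_upd_mono)
  ultimately have "f (vec_upd x j u) \<le> f (vec_upd x j v)"
    using op unfolding order_preserving_pos_def by blast
  thus "f (vec_upd x j u) $ i \<le> f (vec_upd x j v) $ i"
    by (simp add: less_eq_vec_def)
qed

theorem lemma4p9:
  fixes f :: "real ^ 'n \<Rightarrow> real ^ 'n"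
  assumes maps: "\<forall>x\<in>pos_orthant. f x \<in> pos_orthant"
    and op: "order_preserving_pos f"
    and hom: "homogeneous_pos f"
    and an: "\<forall>i. real_analytic_on (\<lambda>x. f x $ i) pos_orthant"
    and mc: "mult_convex f"
  shows "\<forall>x\<in>pos_orthant. graph_f f = graph_mat (jacobian f x)"
proof (intro ballI ext)
  fix x :: "real ^ 'n" and i j :: 'n
  assume x: "x \<in> pos_orthant"
  define g where "g u = f (vec_upd x j u) $ i" for u
  have pos: "0 < g u" if "0 < u" for u
    using maps vec_upd_in_pos_orthant[OF x that] by (simp add: g_def pos_orthant_def)
  have ps: "locally_powser_on g {0<..}"
    unfolding g_def[abs_def] by (rule real_analytic_on_ray_locally_powser[OF an[rule_format] x])
  have mono: "mono_on {0<..} g"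
    unfolding g_def[abs_def] by (rule order_preserving_ray_mono[OF op x])
  have conv: "convex_on UNIV (\<lambda>s. ln (g (exp s)))"
    unfolding g_def by (rule mult_convex_ray[OF mc x])
  have der: "(g has_real_derivative jacobian f x $ i $ j) (at (x $ j))"
    unfolding g_def[abs_def] by (rule real_analytic_jacobian_along_axis[OF an x])
  have "0 < x $ j"
    using x by (simp add: pos_orthant_def)
  have "graph_f f i j \<longleftrightarrow> filterlim (\<lambda>t. g (exp t)) at_top at_top"
    unfolding g_def by (rule graph_f_iff_ray_at_top[OF op hom x])
  also have "\<dots> \<longleftrightarrow> jacobian f x $ i $ j \<noteq> 0"
    by (rule mult_convex_at_top_iff_deriv_nonzero[OF pos mono conv ps \<open>0 < x $ j\<close> der])
  finally show "graph_f f i j = graph_mat (jacobian f x) i j"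
    by (simp add: graph_mat_def)
qed

end
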